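(* Let $J=(G=(V,E),s,t,c,\omega,d,a)$ be an instance of WMCP and let $u,v\in V$ be distinct vertices with $\{u,v\}\neq\{s,t\}$ such that every $(u,v)$-cut $A$ in $G$ satisfies $\omega(A)\ge a+1$. Then the merge of $u$ and $v$ in $J$ is an instance of WMCP equivalent to $J$.
   Context: All graphs are finite, simple and undirected. For a graph $G=(V,E)$ and distinct $x,y\in V$, an $(x,y)$-cut is an edge set $A\subseteq E$ such that $G-A$ contains no path from $x$ to $y$. For $f$ on $E$ and $F\subseteq E$, $f(F)=\sum_{e\in F}f(e)$. WMCP: input $G=(V,E)$, $s,t\in V$, $c:E\to\mathbb{N}$ (positive integers), $\omega:E\to\mathbb{N}$ (positive integers), integers $d,a$; question: is there $D\subseteq E$ with $c(D)\le d$ such that every $(s,t)$-cut $A\subseteq E\setminus D$ satisfies $\omega(A)>a$? Merge: for vertices $u,w$ (not necessarily adjacent), the merge of $u$ and $w$ in an instance is obtained by deleting $u$ and $w$ and adding a new vertex $v_{\{u,w\}}$ adjacent to every vertex of $N(\{u,w\})=(N(u)\cup N(w))\setminus\{u,w\}$; edges not incident with $u$ or $w$ keep their cost and capacity; for each $x\in N(\{u,w\})$ the new edge $\{v_{\{u,w\}},x\}$ gets cost $\min\{c(e'):e'\in E(x,\{u,w\})\}$ and capacity $\sum_{e'\in E(x,\{u,w\})}\omega(e')$, where $E(x,\{u,w\})$ is the set of edges between $x$ and $\{u,w\}$; if $s$ (resp. $t$) is among the merged vertices the new vertex takes its role; $d$ and $a$ are unchanged. Two instances are equivalent if both are yes-instances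 or both are no-instances. *)

theory Defs
  imports Main
begin

definition simple_graph :: "'v set \<Rightarrow> 'v set set \<Rightarrow> bool" where
  "simple_graph V E \<longleftrightarrow> finite V \<and>
     (\<forall>e\<in>E. \<exists>x y. e = {x, y} \<and> x \<in> V \<and> y \<in> V \<and> x \<noteq> y)"

text \<open>A walk (vertex sequence) using only edges of F; a path from x to y exists
  iff a walk from x to y exists.\<close>
definition is_walk :: "'v set set \<Rightarrow> 'v list \<Rightarrow> bool" where
  "is_walk F xs \<longleftrightarrow> xs \<noteq> [] \<and> (\<forall>i. Suc i < length xs \<longrightarrow> {xs ! i, xs ! Suc i} \<in> F)"

definition has_path :: "'v set set \<Rightarrow> 'v \<Rightarrow> 'v \<Rightarrow> bool" where
  "has_path F x y \<longleftrightarrow> (\<exists>xs. is_walk F xs \<and> hd xs = x \<and> last xs = y)"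

definition is_cut :: "'v set set \<Rightarrow> 'v \<Rightarrow> 'v \<Rightarrow> 'v set set \<Rightarrow> bool" where
  "is_cut E x y A \<longleftrightarrow> A \<subseteq> E \<and> \<not> has_path (E - A) x y"

definition wmcp_instance ::
  "'v set \<Rightarrow> 'v set set \<Rightarrow> 'v \<Rightarrow> 'v \<Rightarrow> ('v set \<Rightarrow> nat) \<Rightarrow> ('v set \<Rightarrow> nat) \<Rightarrow> bool" where
  "wmcp_instance V E s t c \<omega> \<longleftrightarrow> simple_graph V E \<and> s \<in> V \<and> t \<in> V \<and> s \<noteq> t \<and>
     (\<forall>e\<in>E. c e > 0 \<and> \<omega> e > 0)"

definition wmcp_yes ::
  "'v set set \<Rightarrow> 'v \<Rightarrow> 'v \<Rightarrow> ('v set \<Rightarrow> nat) \<Rightarrow> ('v set \<Rightarrow> nat) \<Rightarrow> int \<Rightarrow> int \<Rightarrow> bool" where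
  "wmcp_yes E s t c \<omega> d a \<longleftrightarrow>
     (\<exists>D\<subseteq>E. int (sum c D) \<le> d \<and>
        (\<forall>A. is_cut E s t A \<and> A \<subseteq> E - D \<longrightarrow> int (sum \<omega> A) > a))"

text \<open>Merging u and w into a new vertex z (z must not be an old vertex other than u, w).\<close>
definition mmap :: "'v \<Rightarrow> 'v \<Rightarrow> 'v \<Rightarrow> 'v \<Rightarrow> 'v" where
  "mmap z u w x = (if x = u \<or> x = w then z else x)"

definition merge_V :: "'v set \<Rightarrow> 'v \<Rightarrow> 'v \<Rightarrow> 'v \<Rightarrow> 'v set" where
  "merge_V V z u w = (V - {u, w}) \<union> {z}"

definition merge_E :: "'v set set \<Rightarrow> 'v \<Rightarrow> 'v \<Rightarrow> 'v \<Rightarrow> 'v set set" where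
  "merge_E E z u w =
     {e. e \<in> E \<and> u \<notin> e \<and> w \<notin> e} \<union>
     {{z, x} | x. \<exists>e\<in>E. x \<notin> {u, w} \<and> (e = {x, u} \<or> e = {x, w})}"

definition edges_to :: "'v set set \<Rightarrow> 'v \<Rightarrow> 'v \<Rightarrow> 'v \<Rightarrow> 'v set set" where
  "edges_to E u w x = {e \<in> E. e = {x, u} \<or> e = {x, w}}"

definition merge_c :: "'v set set \<Rightarrow> ('v set \<Rightarrow> nat) \<Rightarrow> 'v \<Rightarrow> 'v \<Rightarrow> 'v \<Rightarrow> 'v set \<Rightarrow> nat" where
  "merge_c E c z u w e =
     (if \<exists>x. x \<notin> {u, w} \<and> e = {z, x}
      then Min (c ` edges_to E u w (THE x. x \<notin> {u, w} \<and> e = {z, x}))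
      else c e)"

definition merge_\<omega> :: "'v set set \<Rightarrow> ('v set \<Rightarrow> nat) \<Rightarrow> 'v \<Rightarrow> 'v \<Rightarrow> 'v \<Rightarrow> 'v set \<Rightarrow> nat" where
  "merge_\<omega> E \<omega> z u w e =
     (if \<exists>x. x \<notin> {u, w} \<and> e = {z, x}
      then sum \<omega> (edges_to E u w (THE x. x \<notin> {u, w} \<and> e = {z, x}))
      else \<omega> e)"

end

theory Submission
  imports Defs
begin

text \<open>Merging u and v sends every edge other than {u, v} to an edge of the merged graph,
  and each merged edge stands for its fibre: it costs as much as the cheapest edge of the
  fibre and weighs as much as the whole fibre. A solution D of J therefore yields the
  solution formed by the images of D, since an s-t cut of the merged graph pulls back to
  an s-t cut of G of the same weight. Conversely, a solution D' of the merged instance is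
  lifted by choosing a cheapest edge in each fibre. If some s-t cut A of G avoiding this
  lift had weight at most a, it could not separate u from v; so u and v stay connected in
  G - A, every walk of the merged graph avoiding the fibres contained in A lifts to a walk
  in G - A, and those fibres would form an s-t cut of weight at most a avoiding D'.\<close>

definition edge_rel :: "'v set set \<Rightarrow> ('v \<times> 'v) set" where
  "edge_rel F = {(x, y). {x, y} \<in> F}"

lemma is_walk_Cons_Cons:
  "is_walk F (x # y # ys) \<longleftrightarrow> {x, y} \<in> F \<and> is_walk F (y # ys)"
proof
  assume "is_walk F (x # y # ys)"
  then have "{(x # y # ys) ! i, (x # y # ys) ! Suc i} \<in> F" if "i < Suc (length ys)" for i
    using that unfolding is_walk_def by auto
  from this[of 0] this[of "Suc i" for i] show "{x, y} \<in> F \<and> is_walk F (y # ys)"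
    unfolding is_walk_def by auto
next
  assume "{x, y} \<in> F \<and> is_walk F (y # ys)"
  then show "is_walk F (x # y # ys)"
    unfolding is_walk_def by (auto simp: less_Suc_eq_0_disj)
qed

lemma is_walk_imp_rtrancl: "is_walk F xs \<Longrightarrow> (hd xs, last xs) \<in> (edge_rel F)\<^sup>*"
proof (induction xs rule: induct_list012)
  case (3 x y ys)
  then have "(x, y) \<in> edge_rel F" "(y, last (y # ys)) \<in> (edge_rel F)\<^sup>*"
    by (auto simp: is_walk_Cons_Cons edge_rel_def)
  then show ?case by (auto intro: converse_rtrancl_into_rtrancl)
qed (auto simp: is_walk_def)

lemma rtrancl_imp_is_walk:
  "(x, y) \<in> (edge_rel F)\<^sup>* \<Longrightarrow> \<exists>xs. is_walk F xs \<and> hd xs = x \<and> last xs = y"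
proof (induction rule: converse_rtrancl_induct)
  case base
  show ?case by (rule exI[of _ "[y]"]) (simp add: is_walk_def)
next
  case (step x w)
  then obtain ys where "is_walk F (w # ys)" "last (w # ys) = y"
    by (metis is_walk_def list.collapse)
  with step.hyps(1) show ?case
    by (intro exI[of _ "x # w # ys"]) (simp add: is_walk_Cons_Cons edge_rel_def)
qed

lemma has_path_iff_rtrancl: "has_path F x y \<longleftrightarrow> (x, y) \<in> (edge_rel F)\<^sup>*"
  unfolding has_path_def using is_walk_imp_rtrancl rtrancl_imp_is_walk by metis

lemma rtrancl_edge_rel_sym: "(x, y) \<in> (edge_rel F)\<^sup>* \<Longrightarrow> (y, x) \<in> (edge_rel F)\<^sup>*"
proof -
  have "sym (edge_rel F)" unfolding sym_def edge_rel_def by (auto simp: insert_commute)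
  then show "(x, y) \<in> (edge_rel F)\<^sup>* \<Longrightarrow> (y, x) \<in> (edge_rel F)\<^sup>*"
    using sym_rtrancl unfolding sym_def by blast
qed

lemma rtrancl_map_collapsing:
  assumes "(x, y) \<in> r\<^sup>*" and "\<And>a b. (a, b) \<in> r \<Longrightarrow> f a = f b \<or> (f a, f b) \<in> S"
  shows "(f x, f y) \<in> S\<^sup>*"
  using assms(1)
proof induction
  case (step b c)
  with assms(2)[of b c] show ?case by (auto intro: rtrancl_into_rtrancl)
qed simp

locale vertex_merge =
  fixes V :: "'v set" and E :: "'v set set" and u v z :: 'v
  assumes graph: "simple_graph V E"
    and fresh: "z \<notin> V - {u, v}"
begin

abbreviation merge :: "'v \<Rightarrow> 'v" where "merge \<equiv> mmap z u v"
abbreviation E' :: "'v set set" where "E' \<equiv> merge_E E z u v"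

definition fibre :: "'v set \<Rightarrow> 'v set set" where
  "fibre e' = {e \<in> E. merge ` e = e'}"

lemma finite_V: "finite V"
  using graph unfolding simple_graph_def by blast

lemma edgeE:
  assumes "e \<in> E"
  obtains x y where "e = {x, y}" "x \<in> V" "y \<in> V" "x \<noteq> y"
  using assms graph unfolding simple_graph_def by blast

lemma finite_E: "finite E"
proof -
  have "E \<subseteq> Pow V" by (auto elim: edgeE)
  then show ?thesis using finite_V by (simp add: finite_subset)
qed

lemma merge_apply: "merge x = (if x = u \<or> x = v then z else x)"
  unfolding mmap_def ..

lemma merge_eq_z_iff: "x \<in> V \<Longrightarrow> merge x = z \<longleftrightarrow> x \<in> {u, v}"
  using fresh by (auto simp: merge_apply)

lemma merge_eq_iff:
  "x \<in> V \<Longrightarrow> y \<in> V \<Longrightarrow> merge x = merge y \<longleftrightarrow> x = y \<or> x \<in> {u, v} \<and> y \<in> {u, v}"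
  using fresh by (auto simp: merge_apply)

lemma merge_in_merge_V: "x \<in> V \<Longrightarrow> merge x \<in> merge_V V z u v"
  by (auto simp: merge_V_def merge_apply)

lemma merge_image_edge:
  assumes "e \<in> E" "e \<noteq> {u, v}"
  obtains x y where "e = {x, y}" "x \<in> V" "y \<in> V" "merge ` e = {merge x, merge y}"
    "merge x \<noteq> merge y"
proof -
  from assms(1) obtain x y where xy: "e = {x, y}" "x \<in> V" "y \<in> V" "x \<noteq> y"
    by (rule edgeE)
  with assms(2) have "merge x \<noteq> merge y" by (auto simp: merge_eq_iff)
  with xy that show thesis by simp
qed

lemma merge_image_untouched: "u \<notin> e \<Longrightarrow> v \<notin> e \<Longrightarrow> merge ` e = e"
  by (force simp: merge_apply)

lemma merge_eq_other_iff: "x \<notin> {u, v} \<Longrightarrow> x \<noteq> z \<Longrightarrow> merge y = x \<longleftrightarrow> y = x"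
  by (auto simp: merge_apply)

lemma merge_image_in_E':
  assumes "e \<in> E" "e \<noteq> {u, v}"
  shows "merge ` e \<in> E'"
proof (cases "u \<in> e \<or> v \<in> e")
  case False
  with assms(1) show ?thesis unfolding merge_E_def by (auto simp: merge_image_untouched)
next
  case True
  from assms(1) obtain x y where xy: "e = {x, y}" "x \<in> V" "y \<in> V" "x \<noteq> y"
    by (rule edgeE)
  with True assms(2) obtain p q where pq: "e = {q, p}" "p \<in> {u, v}" "q \<notin> {u, v}"
    by (metis doubleton_eq_iff insert_iff singleton_iff)
  then have "merge ` e = {z, q}" by (auto simp: merge_apply)
  with assms(1) pq show ?thesis unfolding merge_E_def by blast
qed

lemma E'_eq_image: "E' = (\<lambda>e. merge ` e) ` (E - {{u, v}})"
proof
  show "E' \<subseteq> (\<lambda>e. merge ` e) ` (E - {{u, v}})"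
  proof
    fix e' assume "e' \<in> E'"
    then consider "e' \<in> E" "u \<notin> e'" "v \<notin> e'"
      | x e where "e' = {z, x}" "e \<in> E" "x \<notin> {u, v}" "e = {x, u} \<or> e = {x, v}"
      unfolding merge_E_def by blast
    then show "e' \<in> (\<lambda>e. merge ` e) ` (E - {{u, v}})"
    proof cases
      case 1
      then have "merge ` e' = e'" by (auto simp: merge_apply)
      with 1 show ?thesis by (metis DiffI image_eqI insertCI singletonD)
    next
      case 2
      then have "merge ` e = e'" "e \<noteq> {u, v}" by (auto simp: merge_apply)
      with 2 show ?thesis by blast
    qed
  qed
qed (auto intro: merge_image_in_E')

lemma finite_E': "finite E'"
  using finite_E by (simp add: E'_eq_image)

lemma merge_E_cases:
  assumes "e' \<in> E'"
  obtains "e' \<in> E" "u \<notin> e'" "v \<notin> e'" "z \<notin> e'"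
    | x where "x \<in> V" "x \<notin> {u, v}" "x \<noteq> z" "e' = {z, x}"
proof -
  have edge_subset_V: "e \<subseteq> V" if "e \<in> E" for e
    using that by (auto elim: edgeE)
  from assms consider "e' \<in> E" "u \<notin> e'" "v \<notin> e'"
    | x e where "e' = {z, x}" "e \<in> E" "x \<notin> {u, v}" "e = {x, u} \<or> e = {x, v}"
    unfolding merge_E_def by blast
  then show thesis
  proof cases
    case 1
    then show thesis using that(1) edge_subset_V fresh by blast
  next
    case 2
    then have "x \<in> V" using edge_subset_V by blast
    with 2 show thesis using that(2) fresh by blast
  qed
qed

lemma fibre_subset_E: "fibre e' \<subseteq> E"
  unfolding fibre_def by blast

lemma finite_fibre: "finite (fibre e')"
  using finite_E by (simp add: fibre_def)

lemma fibre_nonempty: "e' \<in> E' \<Longrightarrow> fibre e' \<noteq> {}"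
  unfolding fibre_def E'_eq_image by blast

lemma merge_uv_notin_E': "merge ` {u, v} \<notin> E'"
proof
  assume "merge ` {u, v} \<in> E'"
  then show False by (cases rule: merge_E_cases) (auto simp: merge_apply)
qed

lemma fibre_untouched:
  assumes "e' \<in> E" "u \<notin> e'" "v \<notin> e'"
  shows "fibre e' = {e'}"
proof (intro equalityI subsetI)
  fix e assume "e \<in> fibre e'"
  then have e: "e \<in> E" "merge ` e = e'" unfolding fibre_def by auto
  have "z \<notin> e'" using assms fresh by (auto elim: edgeE)
  with e have "u \<notin> e" "v \<notin> e" by (auto simp: merge_apply)
  with e show "e \<in> {e'}" by (simp add: merge_image_untouched)
qed (use assms in \<open>simp add: fibre_def merge_image_untouched\<close>)

lemma fibre_edge_at_z:
  assumes x: "x \<in> V" "x \<notin> {u, v}"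
  shows "fibre {z, x} = edges_to E u v x"
proof (intro equalityI subsetI)
  have "x \<noteq> z" using x fresh by blast
  fix e assume "e \<in> fibre {z, x}"
  then have e: "e \<in> E" "merge ` e = {z, x}" unfolding fibre_def by auto
  then obtain p q where pq: "e = {p, q}" "p \<in> V" "q \<in> V" by (elim edgeE)
  with e \<open>x \<noteq> z\<close> have "merge p = z \<and> merge q = x \<or> merge p = x \<and> merge q = z"
    by (auto simp: doubleton_eq_iff)
  with pq x \<open>x \<noteq> z\<close> have "e = {x, u} \<or> e = {x, v}"
    by (auto simp: merge_eq_z_iff merge_eq_other_iff insert_commute)
  with e show "e \<in> edges_to E u v x" unfolding edges_to_def by blast
next
  fix e assume "e \<in> edges_to E u v x"
  with x show "e \<in> fibre {z, x}"
    unfolding edges_to_def fibre_def by (auto simp: merge_apply insert_commute)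
qed

lemma the_other_endpoint_eq:
  assumes "x \<in> V" "x \<notin> {u, v}"
  shows "(THE y. y \<notin> {u, v} \<and> {z, x} = {z, y}) = x"
proof (rule the_equality)
  have "x \<noteq> z" using assms fresh by blast
  then show "y = x" if "y \<notin> {u, v} \<and> {z, x} = {z, y}" for y
    using that by (auto simp: doubleton_eq_iff)
qed (use assms in simp)

lemma merge_c_eq_Min_fibre:
  assumes "e' \<in> E'"
  shows "merge_c E c z u v e' = Min (c ` fibre e')"
  using assms
proof (cases rule: merge_E_cases)
  case 1
  then have not_at_z: "\<not> (\<exists>x. x \<notin> {u, v} \<and> e' = {z, x})" by auto
  show ?thesis using 1 unfolding merge_c_def if_not_P[OF not_at_z] by (simp add: fibre_untouched)
next
  case (2 x)
  then have at_z: "\<exists>y. y \<notin> {u, v} \<and> {z, x} = {z, y}" by blast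
  show ?thesis
    unfolding 2(4) merge_c_def if_P[OF at_z] the_other_endpoint_eq[OF 2(1,2)] fibre_edge_at_z[OF 2(1,2)] ..
qed

lemma merge_\<omega>_eq_sum_fibre:
  assumes "e' \<in> E'"
  shows "merge_\<omega> E \<omega> z u v e' = sum \<omega> (fibre e')"
  using assms
proof (cases rule: merge_E_cases)
  case 1
  then have not_at_z: "\<not> (\<exists>x. x \<notin> {u, v} \<and> e' = {z, x})" by auto
  show ?thesis using 1 unfolding merge_\<omega>_def if_not_P[OF not_at_z] by (simp add: fibre_untouched)
next
  case (2 x)
  then have at_z: "\<exists>y. y \<notin> {u, v} \<and> {z, x} = {z, y}" by blast
  show ?thesis
    unfolding 2(4) merge_\<omega>_def if_P[OF at_z] the_other_endpoint_eq[OF 2(1,2)] fibre_edge_at_z[OF 2(1,2)] ..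
qed

lemma sum_merge_\<omega>:
  assumes "A' \<subseteq> E'"
  shows "sum (merge_\<omega> E \<omega> z u v) A' = sum \<omega> (\<Union> (fibre ` A'))"
proof -
  have "finite A'" using assms finite_E' finite_subset by blast
  then have "sum \<omega> (\<Union> (fibre ` A')) = (\<Sum>e'\<in>A'. sum \<omega> (fibre e'))"
    by (intro sum.UNION_disjoint) (auto simp: finite_fibre[unfolded fibre_def] fibre_def)
  also have "\<dots> = sum (merge_\<omega> E \<omega> z u v) A'"
    using assms by (intro sum.cong) (auto simp: merge_\<omega>_eq_sum_fibre)
  finally show ?thesis ..
qed

lemma merge_c_le:
  assumes "e \<in> E" "e \<noteq> {u, v}"
  shows "merge_c E c z u v (merge ` e) \<le> c e"
proof -
  have "e \<in> fibre (merge ` e)" using assms(1) by (simp add: fibre_def)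
  then show ?thesis
    using assms by (simp add: merge_c_eq_Min_fibre merge_image_in_E' finite_fibre)
qed

lemma cheapest_in_fibre:
  assumes "e' \<in> E'"
  obtains e where "e \<in> fibre e'" "c e = merge_c E c z u v e'"
proof -
  have "Min (c ` fibre e') \<in> c ` fibre e'"
    using assms by (intro Min_in) (auto simp: finite_fibre fibre_nonempty)
  with assms that show thesis by (auto simp: merge_c_eq_Min_fibre)
qed


lemma merge_preserves_connection:
  assumes "(x, y) \<in> (edge_rel (E - A))\<^sup>*"
    and "\<And>e. e \<in> E - A \<Longrightarrow> e \<noteq> {u, v} \<Longrightarrow> merge ` e \<notin> A'"
  shows "(merge x, merge y) \<in> (edge_rel (E' - A'))\<^sup>*"
  using assms(1)
proof (rule rtrancl_map_collapsing)
  fix p q assume "(p, q) \<in> edge_rel (E - A)"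
  then have pq: "{p, q} \<in> E - A" by (simp add: edge_rel_def)
  show "merge p = merge q \<or> (merge p, merge q) \<in> edge_rel (E' - A')"
  proof (cases "{p, q} = {u, v}")
    case True
    then show ?thesis by (auto simp: doubleton_eq_iff merge_apply)
  next
    case False
    with pq have "merge ` {p, q} \<in> E'" by (intro merge_image_in_E') auto
    moreover have "merge ` {p, q} \<notin> A'" using pq False assms(2) by blast
    ultimately show ?thesis by (simp add: edge_rel_def)
  qed
qed

lemma connected_if_merge_eq:
  assumes "(u, v) \<in> (edge_rel (E - A))\<^sup>*" "x \<in> V" "y \<in> V" "merge x = merge y"
  shows "(x, y) \<in> (edge_rel (E - A))\<^sup>*"
proof -
  from assms(2-4) have "x = y \<or> x \<in> {u, v} \<and> y \<in> {u, v}" by (simp add: merge_eq_iff)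
  then show ?thesis using assms(1) rtrancl_edge_rel_sym[OF assms(1)] by auto
qed

lemma lift_merged_edge:
  assumes "(b, b') \<in> edge_rel (E' - {e' \<in> E'. fibre e' \<subseteq> A})"
  obtains w w' where "w \<in> V" "w' \<in> V" "merge w = b" "merge w' = b'"
    "(w, w') \<in> edge_rel (E - A)"
proof -
  from assms obtain e where e: "e \<in> E" "e \<notin> A" "merge ` e = {b, b'}"
    by (auto simp: edge_rel_def fibre_def)
  then obtain w w' where ww': "e = {w, w'}" "w \<in> V" "w' \<in> V" by (elim edgeE)
  with e have "(w, w') \<in> edge_rel (E - A)" "(w', w) \<in> edge_rel (E - A)"
    by (auto simp: edge_rel_def insert_commute)
  moreover from e ww' have "merge w = b \<and> merge w' = b' \<or> merge w' = b \<and> merge w = b'"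
    by (auto simp: doubleton_eq_iff)
  ultimately show thesis using that ww' by blast
qed

lemma merge_reflects_connection:
  assumes uv: "(u, v) \<in> (edge_rel (E - A))\<^sup>*"
    and "(merge x, merge y) \<in> (edge_rel (E' - {e' \<in> E'. fibre e' \<subseteq> A}))\<^sup>*"
    and "x \<in> V" "y \<in> V"
  shows "(x, y) \<in> (edge_rel (E - A))\<^sup>*"
proof -
  have "\<exists>y'\<in>V. merge y' = q \<and> (x, y') \<in> (edge_rel (E - A))\<^sup>*"
    if "(merge x, q) \<in> (edge_rel (E' - {e' \<in> E'. fibre e' \<subseteq> A}))\<^sup>*" for q
    using that
  proof induction
    case base
    with \<open>x \<in> V\<close> show ?case by blast
  next
    case (step b b')
    then obtain y' where y': "y' \<in> V" "merge y' = b" "(x, y') \<in> (edge_rel (E - A))\<^sup>*"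
      by blast
    from step.hyps(2) obtain w w' where w: "w \<in> V" "w' \<in> V" "merge w = b" "merge w' = b'"
      "(w, w') \<in> edge_rel (E - A)"
      by (rule lift_merged_edge)
    have "(y', w) \<in> (edge_rel (E - A))\<^sup>*"
      using connected_if_merge_eq[OF uv] y' w by simp
    with y' w have "(x, w') \<in> (edge_rel (E - A))\<^sup>*"
      by (meson rtrancl.rtrancl_into_rtrancl rtrancl_trans)
    with w show ?case by blast
  qed
  with assms(2) obtain y' where "y' \<in> V" "merge y' = merge y" "(x, y') \<in> (edge_rel (E - A))\<^sup>*"
    by blast
  with connected_if_merge_eq[OF uv] \<open>y \<in> V\<close> show ?thesis by (meson rtrancl_trans)
qed

lemma cut_pullback:
  assumes "is_cut E' (merge s) (merge t) A'"
  shows "is_cut E s t {e \<in> E. merge ` e \<in> A'}"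
proof -
  have "(merge s, merge t) \<notin> (edge_rel (E' - A'))\<^sup>*"
    using assms by (simp add: is_cut_def has_path_iff_rtrancl)
  then have "(s, t) \<notin> (edge_rel (E - {e \<in> E. merge ` e \<in> A'}))\<^sup>*"
    using merge_preserves_connection by blast
  then show ?thesis by (simp add: is_cut_def has_path_iff_rtrancl)
qed

lemma cut_of_fibres:
  assumes "(u, v) \<in> (edge_rel (E - A))\<^sup>*" "s \<in> V" "t \<in> V" "is_cut E s t A"
  shows "is_cut E' (merge s) (merge t) {e' \<in> E'. fibre e' \<subseteq> A}"
proof -
  have "(s, t) \<notin> (edge_rel (E - A))\<^sup>*"
    using assms(4) by (simp add: is_cut_def has_path_iff_rtrancl)
  then have "(merge s, merge t) \<notin> (edge_rel (E' - {e' \<in> E'. fibre e' \<subseteq> A}))\<^sup>*"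
    using merge_reflects_connection[OF assms(1)] assms(2,3) by blast
  then show ?thesis by (simp add: is_cut_def has_path_iff_rtrancl)
qed

lemma simple_graph_merge: "simple_graph (merge_V V z u v) E'"
  unfolding simple_graph_def
proof (intro conjI ballI)
  show "finite (merge_V V z u v)" using finite_V by (simp add: merge_V_def)
next
  fix e' assume "e' \<in> E'"
  then obtain e where "e \<in> E" "e \<noteq> {u, v}" "e' = merge ` e" by (auto simp: E'_eq_image)
  then show "\<exists>x y. e' = {x, y} \<and> x \<in> merge_V V z u v \<and> y \<in> merge_V V z u v \<and> x \<noteq> y"
    by (elim merge_image_edge) (auto intro: merge_in_merge_V)
qed

lemma wmcp_instance_merge:
  assumes "wmcp_instance V E s t c \<omega>" "{u, v} \<noteq> {s, t}"
  shows "wmcp_instance (merge_V V z u v) E' (merge s) (merge t)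
           (merge_c E c z u v) (merge_\<omega> E \<omega> z u v)"
  unfolding wmcp_instance_def
proof (intro conjI ballI)
  have st: "s \<in> V" "t \<in> V" "s \<noteq> t" and pos: "\<And>e. e \<in> E \<Longrightarrow> c e > 0 \<and> \<omega> e > 0"
    using assms(1) by (auto simp: wmcp_instance_def)
  show "merge s \<in> merge_V V z u v" "merge t \<in> merge_V V z u v"
    using st by (simp_all add: merge_in_merge_V)
  show "merge s \<noteq> merge t"
    using st assms(2) by (auto simp: merge_eq_iff)
  fix e' assume e': "e' \<in> E'"
  with pos fibre_subset_E have "\<forall>e\<in>fibre e'. c e > 0 \<and> \<omega> e > 0" by blast
  with e' show "merge_c E c z u v e' > 0" "merge_\<omega> E \<omega> z u v e' > 0"
    by (auto simp: merge_c_eq_Min_fibre merge_\<omega>_eq_sum_fibre finite_fibre fibre_nonempty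
        intro: sum_pos)
qed (rule simple_graph_merge)

lemma merge_yes_if_yes:
  assumes "wmcp_yes E s t c \<omega> d a"
  shows "wmcp_yes E' (merge s) (merge t) (merge_c E c z u v) (merge_\<omega> E \<omega> z u v) d a"
proof -
  obtain D where D: "D \<subseteq> E" "int (sum c D) \<le> d"
    and heavy: "\<And>A. is_cut E s t A \<Longrightarrow> A \<subseteq> E - D \<Longrightarrow> int (sum \<omega> A) > a"
    using assms unfolding wmcp_yes_def by blast
  define D' where "D' = (\<lambda>e. merge ` e) ` (D - {{u, v}})"
  have "D' \<subseteq> E'" using D(1) by (auto simp: D'_def E'_eq_image)
  have "finite D" using D(1) finite_E finite_subset by blast
  have "sum (merge_c E c z u v) D' \<le> (\<Sum>e\<in>D - {{u, v}}. merge_c E c z u v (merge ` e))"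
    unfolding D'_def using \<open>finite D\<close>
    sum_image_le[of "D - {{u, v}}" "merge_c E c z u v" "\<lambda>e. merge ` e"] by (simp add: o_def)
  also have "\<dots> \<le> sum c (D - {{u, v}})"
    using D(1) by (intro sum_mono merge_c_le) auto
  also have "\<dots> \<le> sum c D"
    using \<open>finite D\<close> by (intro sum_mono2) auto
  finally have cost: "int (sum (merge_c E c z u v) D') \<le> d" using D(2) by linarith
  have "int (sum (merge_\<omega> E \<omega> z u v) A') > a"
    if A': "is_cut E' (merge s) (merge t) A'" "A' \<subseteq> E' - D'" for A'
  proof -
    let ?A = "{e \<in> E. merge ` e \<in> A'}"
    have "?A \<subseteq> E - D"
    proof
      fix e assume e: "e \<in> ?A"
      show "e \<in> E - D"
      proof (cases "e = {u, v}")
        case True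
        with e A'(2) merge_uv_notin_E' show ?thesis by auto
      next
        case False
        with e A'(2) show ?thesis by (auto simp: D'_def)
      qed
    qed
    with heavy cut_pullback[OF A'(1)] have "int (sum \<omega> ?A) > a" by blast
    moreover have "?A = \<Union> (fibre ` A')" by (auto simp: fibre_def)
    moreover have "A' \<subseteq> E'" using A'(2) by blast
    ultimately show ?thesis by (simp only: sum_merge_\<omega>)
  qed
  with \<open>D' \<subseteq> E'\<close> cost show ?thesis unfolding wmcp_yes_def by blast
qed

lemma yes_if_merge_yes:
  assumes "s \<in> V" "t \<in> V"
    and uv_heavy: "\<forall>A. is_cut E u v A \<longrightarrow> int (sum \<omega> A) \<ge> a + 1"
    and "wmcp_yes E' (merge s) (merge t) (merge_c E c z u v) (merge_\<omega> E \<omega> z u v) d a"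
  shows "wmcp_yes E s t c \<omega> d a"
proof -
  obtain D' where D': "D' \<subseteq> E'" "int (sum (merge_c E c z u v) D') \<le> d"
    and heavy: "\<And>A'. is_cut E' (merge s) (merge t) A' \<Longrightarrow> A' \<subseteq> E' - D' \<Longrightarrow>
      int (sum (merge_\<omega> E \<omega> z u v) A') > a"
    using assms(4) unfolding wmcp_yes_def by blast
  have "\<forall>e'\<in>E'. \<exists>e. e \<in> fibre e' \<and> c e = merge_c E c z u v e'"
    using cheapest_in_fibre by metis
  then obtain h where h: "\<And>e'. e' \<in> E' \<Longrightarrow> h e' \<in> fibre e' \<and> c (h e') = merge_c E c z u v e'"
    by metis
  define D where "D = h ` D'"
  have "D \<subseteq> E" using h D'(1) fibre_subset_E by (auto simp: D_def)
  have "merge ` h e' = e'" if "e' \<in> D'" for e'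
    using h[of e'] that D'(1) by (auto simp: fibre_def)
  then have "inj_on h D'" by (rule inj_on_inverseI)
  then have "sum c D = sum (merge_c E c z u v) D'"
    unfolding D_def using h D'(1) by (simp add: sum.reindex subset_iff)
  with D'(2) have cost: "int (sum c D) \<le> d" by simp
  have "int (sum \<omega> A) > a" if A: "is_cut E s t A" "A \<subseteq> E - D" for A
  proof (rule ccontr)
    assume light: "\<not> int (sum \<omega> A) > a"
    have "\<not> is_cut E u v A"
    proof
      assume "is_cut E u v A"
      with uv_heavy have "int (sum \<omega> A) \<ge> a + 1" by blast
      with light show False by linarith
    qed
    with A(2) have uv_connected: "(u, v) \<in> (edge_rel (E - A))\<^sup>*"
      by (auto simp: is_cut_def has_path_iff_rtrancl)
    let ?A' = "{e' \<in> E'. fibre e' \<subseteq> A}"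
    have "?A' \<subseteq> E' - D'"
      using h A(2) unfolding D_def by blast
    with heavy cut_of_fibres[OF uv_connected assms(1,2) A(1)]
    have "int (sum (merge_\<omega> E \<omega> z u v) ?A') > a" by blast
    moreover have "sum (merge_\<omega> E \<omega> z u v) ?A' = sum \<omega> (\<Union> (fibre ` ?A'))"
      by (rule sum_merge_\<omega>) blast
    moreover have "sum \<omega> (\<Union> (fibre ` ?A')) \<le> sum \<omega> A"
      using A(2) finite_E by (intro sum_mono2) (auto intro: finite_subset)
    ultimately show False using light by linarith
  qed
  with \<open>D \<subseteq> E\<close> cost show ?thesis unfolding wmcp_yes_def by blast
qed

end

theorem mainTheorem18:
  fixes V :: "'v set" and E :: "'v set set" and s t u v z :: 'v
    and c \<omega> :: "'v set \<Rightarrow> nat" and d a :: int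
  assumes inst: "wmcp_instance V E s t c \<omega>"
    and uv: "u \<in> V" "v \<in> V" "u \<noteq> v" "{u, v} \<noteq> {s, t}"
    and cuts: "\<forall>A. is_cut E u v A \<longrightarrow> int (sum \<omega> A) \<ge> a + 1"
    and fresh: "z \<notin> V - {u, v}"
  shows "wmcp_instance (merge_V V z u v) (merge_E E z u v) (mmap z u v s) (mmap z u v t)
           (merge_c E c z u v) (merge_\<omega> E \<omega> z u v)
       \<and> (wmcp_yes E s t c \<omega> d a \<longleftrightarrow>
          wmcp_yes (merge_E E z u v) (mmap z u v s) (mmap z u v t)
                   (merge_c E c z u v) (merge_\<omega> E \<omega> z u v) d a)"
proof -
  interpret vertex_merge V E u v z
    using inst fresh by unfold_locales (auto simp: wmcp_instance_def)
  have "s \<in> V" "t \<in> V" using inst by (auto simp: wmcp_instance_def)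
  then show ?thesis
    using wmcp_instance_merge[OF inst uv(4)] merge_yes_if_yes yes_if_merge_yes[OF _ _ cuts]
    by blast
qed

end
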